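(* Let $r$, $s$, $c$ and $a_n$ be any integers and let $n$ be a positive integer, and assume $V_r\neq0$. Then \[ \sum_{a_{n-1}=c}^{a_n}\sum_{a_{n-2}=c}^{a_{n-1}}\cdots\sum_{a_0=c}^{a_1}\frac{(-1)^{a_0}W_{2ra_0+s}}{q^{ra_0}} =(-1)^{a_n}\frac{W_{r(2a_n+n)+s}}{q^{ra_n}V_r^n}+\frac{(-1)^c}{q^{r(c-1)}}\sum_{j=0}^{n-1}\frac{W_{r(n-j+2c-2)+s}}{V_r^{n-j}}\binom{a_n+j-c}{j}. \]
   Context: Let $a,b,p,q$ be complex numbers with $p\neq0$, $q\neq0$. The Horadam sequence $W_j=W_j(a,b;p,q)$ is defined by $W_0=a$, $W_1=b$, $W_j=pW_{j-1}-qW_{j-2}$ for $j\ge2$, and extended to negative indices by $W_{-m}=(pW_{-m+1}-W_{-m+2})/q$, so the recurrence holds for all integers. $V_j=W_j(2,p;p,q)$ is the Lucas sequence of the second kind. For integers $c,m$ and a function $f$ on the integers, $\sum_{k=c}^m f(k)$ denotes the usual sum if $m\ge c$, equals $0$ if $m=c-1$, and equals $-\sum_{k=m+1}^{c-1}f(k)$ if $m\le c-2$. The nested sum $\sum_{a_{n-1}=c}^{a_n}\cdots\sum_{a_0=c}^{a_1}g(a_0)$ is the iterated sum with $n$ summation signs: innermost over $a_0$ from $c$ to $a_1$, then $a_1$ from $c$ to $a_2$, ..., outermost $a_{n-1}$ from $c$ to $a_n$. For an integer $j\ge0$ and any number $y$, $\binom{y}{j}=y(y-1)\cdots(y-j+1)/j!$.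 *)

theory Defs
  imports Complex_Main
begin

fun hor_pos :: "complex \<Rightarrow> complex \<Rightarrow> complex \<Rightarrow> complex \<Rightarrow> nat \<Rightarrow> complex" where
  "hor_pos a b p q 0 = a"
| "hor_pos a b p q (Suc 0) = b"
| "hor_pos a b p q (Suc (Suc j)) = p * hor_pos a b p q (Suc j) - q * hor_pos a b p q j"

(* hor_neg a b p q m = W_{-m}, via W_{-m} = (p W_{-m+1} - W_{-m+2}) / q *)
fun hor_neg :: "complex \<Rightarrow> complex \<Rightarrow> complex \<Rightarrow> complex \<Rightarrow> nat \<Rightarrow> complex" where
  "hor_neg a b p q 0 = a"
| "hor_neg a b p q (Suc 0) = (p * a - b) / q"
| "hor_neg a b p q (Suc (Suc m)) = (p * hor_neg a b p q (Suc m) - hor_neg a b p q m) / q"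

definition horadam :: "complex \<Rightarrow> complex \<Rightarrow> complex \<Rightarrow> complex \<Rightarrow> int \<Rightarrow> complex" where
  "horadam a b p q j = (if 0 \<le> j then hor_pos a b p q (nat j) else hor_neg a b p q (nat (- j)))"

definition lucasV :: "complex \<Rightarrow> complex \<Rightarrow> int \<Rightarrow> complex" where
  "lucasV p q j = horadam 2 p p q j"

(* generalized sum convention sum_{k=c}^m f(k) *)
definition gsum :: "int \<Rightarrow> int \<Rightarrow> (int \<Rightarrow> complex) \<Rightarrow> complex" where
  "gsum c m f = (if c \<le> m then (\<Sum>k\<in>{c..m}. f k)
                 else if m = c - 1 then 0
                 else - (\<Sum>k\<in>{m+1..c-1}. f k))"

(* nested c n g x = sum_{a_{n-1}=c}^{x} ... sum_{a_0=c}^{a_1} g(a_0)  (n summation signs) *)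
fun nested :: "int \<Rightarrow> nat \<Rightarrow> (int \<Rightarrow> complex) \<Rightarrow> int \<Rightarrow> complex" where
  "nested c 0 g = g"
| "nested c (Suc n) g = (\<lambda>x. gsum c x (nested c n g))"

end

theory Submission
  imports Defs
begin

text \<open>Write the right-hand side as \<open>F n a\<^sub>n\<close>. The identity
  \<open>W(m + r) + q\<^sup>r W(m - r) = V(r) W(m)\<close> makes the leading term of \<open>F (n + 1)\<close> an
  antidifference of the leading term of \<open>F n\<close>, Pascal's rule does the same for the binomial sum,
  and \<open>F (n + 1)\<close> vanishes at \<open>c - 1\<close>. Since \<open>F 0\<close> is the summand, telescoping each
  generalized sum shows by induction on \<open>n\<close> that the nested sum equals \<open>F n\<close>.\<close>

lemma horadam_rec:
  assumes "q \<noteq> 0"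
  shows "horadam a b p q (j + 2) = p * horadam a b p q (j + 1) - q * horadam a b p q j"
proof -
  consider "0 \<le> j" | "j = -1" | "j = -2" | "j \<le> -3" by linarith
  then show ?thesis
  proof cases
    case 1
    then have "nat (j + 2) = Suc (Suc (nat j))" "nat (j + 1) = Suc (nat j)" by auto
    with 1 show ?thesis by (simp add: horadam_def)
  next
    case 2
    with assms show ?thesis by (simp add: horadam_def field_simps)
  next
    case 3
    with assms show ?thesis by (simp add: horadam_def field_simps numeral_2_eq_2)
  next
    case 4
    then have "nat (- j) = Suc (Suc (nat (- j - 2)))" "nat (- j - 1) = Suc (nat (- j - 2))"
      "nat (- (j + 1)) = Suc (nat (- j - 2))" "nat (- (j + 2)) = nat (- j - 2)"
      by auto
    with 4 assms show ?thesis by (simp add: horadam_def field_simps)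
  qed
qed

lemma int_recurrence_unique:
  fixes f g :: "int \<Rightarrow> 'a::field"
  assumes "q \<noteq> 0"
    and rec_f: "\<And>j. f (j + 2) = p * f (j + 1) - q * f j"
    and rec_g: "\<And>j. g (j + 2) = p * g (j + 1) - q * g j"
    and "f 0 = g 0" and "f 1 = g 1"
  shows "f j = g j"
proof -
  have "f i = g i \<and> f (i + 1) = g (i + 1)" for i
  proof (induction i rule: int_induct[where k = 0])
    case base
    with assms show ?case by simp
  next
    case (step1 i)
    with rec_f[of i] rec_g[of i] show ?case by (simp add: add.assoc)
  next
    case (step2 i)
    have "q * f (i - 1) = p * f i - f (i + 1)"
      using rec_f[of "i - 1"] by (simp add: algebra_simps)
    also have "\<dots> = q * g (i - 1)"
      using rec_g[of "i - 1"] step2 by (simp add: algebra_simps)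
    finally show ?case
      using step2 \<open>q \<noteq> 0\<close> by simp
  qed
  then show ?thesis by blast
qed

lemma lucasV_0 [simp]: "lucasV p q 0 = 2"
  by (simp add: lucasV_def horadam_def)

lemma lucasV_1 [simp]: "lucasV p q 1 = p"
  by (simp add: lucasV_def horadam_def)

lemma horadam_add_diff_eq_lucasV_mult:
  assumes "q \<noteq> 0"
  shows "horadam a b p q (m + r) + q powi r * horadam a b p q (m - r) = lucasV p q r * horadam a b p q m"
proof -
  let ?W = "horadam a b p q"
  have rec_lhs: "?W (m + (j + 2)) + q powi (j + 2) * ?W (m - (j + 2))
      = p * (?W (m + (j + 1)) + q powi (j + 1) * ?W (m - (j + 1))) - q * (?W (m + j) + q powi j * ?W (m - j))"
    for j
  proof -
    have up: "?W (m + (j + 2)) = p * ?W (m + (j + 1)) - q * ?W (m + j)"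
      using horadam_rec[OF assms, of a b p "m + j"] by (simp add: add.assoc)
    have "q * ?W (m - (j + 2)) = p * ?W (m - (j + 1)) - ?W (m - j)"
      using horadam_rec[OF assms, of a b p "m - j - 2"] by (simp add: algebra_simps)
    then have down: "q powi (j + 2) * ?W (m - (j + 2)) = q powi (j + 1) * (p * ?W (m - (j + 1)) - ?W (m - j))"
      using assms power_int_add_1[of q "j + 1"] by (simp add: add.assoc)
    have "q powi (j + 1) = q powi j * q"
      using assms by (simp add: power_int_add_1)
    then show ?thesis
      unfolding up down by (simp add: algebra_simps)
  qed
  have rec_rhs: "lucasV p q (j + 2) * ?W m = p * (lucasV p q (j + 1) * ?W m) - q * (lucasV p q j * ?W m)" for j
    unfolding lucasV_def horadam_rec[OF assms] by (simp add: algebra_simps)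
  have at_one: "?W (m + 1) + q * ?W (m - 1) = p * ?W m"
    using horadam_rec[OF assms, of a b p "m - 1"] by (simp add: add.commute)
  show ?thesis
    by (rule int_recurrence_unique[OF assms, where f = "\<lambda>r. ?W (m + r) + q powi r * ?W (m - r)"
          and g = "\<lambda>r. lucasV p q r * ?W m", OF rec_lhs rec_rhs])
      (simp_all add: at_one)
qed

lemma sum_Icc_int_telescope:
  fixes F :: "int \<Rightarrow> 'a::ab_group_add"
  assumes "c - 1 \<le> x"
  shows "(\<Sum>k\<in>{c..x}. F k - F (k - 1)) = F x - F (c - 1)"
  using assms
proof (induction x rule: int_ge_induct)
  case base
  then show ?case by simp
next
  case (step x)
  have "{c..x + 1} = insert (x + 1) {c..x}" "x + 1 \<notin> {c..x}"
    using step.hyps by auto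
  with step.IH show ?case by simp
qed

lemma gsum_telescope:
  "gsum c x (\<lambda>k. F k - F (k - 1)) = F x - F (c - 1)"
proof -
  consider "c \<le> x" | "x = c - 1" | "x < c - 1" by linarith
  then show ?thesis
  proof cases
    case 1
    then show ?thesis by (simp add: gsum_def sum_Icc_int_telescope)
  next
    case 2
    then show ?thesis by (simp add: gsum_def)
  next
    case 3
    then show ?thesis by (simp add: gsum_def sum_Icc_int_telescope)
  qed
qed

lemma nested_eq_antidifference:
  assumes "F 0 = g"
    and "\<And>n k. F (Suc n) k - F (Suc n) (k - 1) = F n k"
    and "\<And>n. F (Suc n) (c - 1) = 0"
  shows "nested c n g = F n"
proof (induction n)
  case 0
  with assms(1) show ?case by simp
next
  case (Suc n)
  have "nested c (Suc n) g x = F (Suc n) x" for x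
  proof -
    have "nested c (Suc n) g x = gsum c x (\<lambda>k. F (Suc n) k - F (Suc n) (k - 1))"
      by (simp add: Suc.IH assms(2))
    also have "\<dots> = F (Suc n) x"
      by (simp add: gsum_telescope assms(3))
    finally show ?thesis .
  qed
  then show ?case by blast
qed

definition horadam_lead :: "complex \<Rightarrow> complex \<Rightarrow> complex \<Rightarrow> complex \<Rightarrow> int \<Rightarrow> int \<Rightarrow> nat \<Rightarrow> int \<Rightarrow> complex" where
  "horadam_lead a b p q r s n x =
     (-1) powi x * horadam a b p q (r * (2 * x + int n) + s) / (q powi (r * x) * lucasV p q r ^ n)"

definition horadam_gchoose_sum :: "complex \<Rightarrow> complex \<Rightarrow> complex \<Rightarrow> complex \<Rightarrow> int \<Rightarrow> int \<Rightarrow> int \<Rightarrow> nat \<Rightarrow> int \<Rightarrow> complex" where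
  "horadam_gchoose_sum a b p q r s c n x =
     (\<Sum>j<n. horadam a b p q (r * (int n - int j + 2 * c - 2) + s) / lucasV p q r ^ (n - j)
        * (of_int (x + int j - c) gchoose j))"

lemma horadam_lead_diff:
  assumes "q \<noteq> 0" and "lucasV p q r \<noteq> 0"
  shows "horadam_lead a b p q r s (Suc n) k - horadam_lead a b p q r s (Suc n) (k - 1)
    = horadam_lead a b p q r s n k"
proof -
  let ?W = "horadam a b p q" and ?V = "lucasV p q r"
  define m where "m = r * (2 * k + int n) + s"
  have idx: "r * (2 * k + int (Suc n)) + s = m + r" "r * (2 * (k - 1) + int (Suc n)) + s = m - r"
    unfolding m_def by (simp_all add: algebra_simps)
  have "(-1::complex) powi (k - 1) = - ((-1) powi k)" "q powi (r * (k - 1)) = q powi (r * k) / q powi r"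
    using assms(1) by (simp_all add: power_int_diff right_diff_distrib)
  then have "horadam_lead a b p q r s (Suc n) k - horadam_lead a b p q r s (Suc n) (k - 1)
     = (-1) powi k * (?W (m + r) + q powi r * ?W (m - r)) / (q powi (r * k) * ?V ^ Suc n)"
    unfolding horadam_lead_def idx using assms by (simp add: field_simps)
  also have "\<dots> = (-1) powi k * ?W m / (q powi (r * k) * ?V ^ n)"
    unfolding horadam_add_diff_eq_lucasV_mult[OF assms(1)] using assms by (simp add: field_simps)
  finally show ?thesis
    unfolding horadam_lead_def m_def .
qed

lemma horadam_gchoose_sum_diff:
  "horadam_gchoose_sum a b p q r s c (Suc n) k - horadam_gchoose_sum a b p q r s c (Suc n) (k - 1)
    = horadam_gchoose_sum a b p q r s c n k"
proof -
  let ?w = "\<lambda>j. horadam a b p q (r * (int (Suc n) - int j + 2 * c - 2) + s) / lucasV p q r ^ (Suc n - j)"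
  let ?B = "\<lambda>x j. of_int (x + int j - c) gchoose j :: complex"
  have pascal: "?B k (Suc j) - ?B (k - 1) (Suc j) = ?B k j" for j
    using gbinomial_Suc_Suc[of "of_int (k + int j - c) :: complex" j] by (simp add: algebra_simps)
  have "horadam_gchoose_sum a b p q r s c (Suc n) k - horadam_gchoose_sum a b p q r s c (Suc n) (k - 1)
      = (\<Sum>j<Suc n. ?w j * (?B k j - ?B (k - 1) j))"
    unfolding horadam_gchoose_sum_def by (simp add: sum_subtractf right_diff_distrib)
  also have "\<dots> = (\<Sum>j<n. ?w (Suc j) * ?B k j)"
    unfolding sum.lessThan_Suc_shift pascal by simp
  also have "\<dots> = horadam_gchoose_sum a b p q r s c n k"
    unfolding horadam_gchoose_sum_def by (intro sum.cong refl) (simp add: algebra_simps)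
  finally show ?thesis .
qed

lemma horadam_closed_form_vanishes:
  "horadam_lead a b p q r s (Suc n) (c - 1)
    + (-1) powi c / q powi (r * (c - 1)) * horadam_gchoose_sum a b p q r s c (Suc n) (c - 1) = 0"
proof -
  have "(of_nat j :: complex) gchoose Suc j = 0" for j
    by (simp flip: binomial_gbinomial)
  then have "horadam_gchoose_sum a b p q r s c (Suc n) (c - 1)
      = horadam a b p q (r * (int (Suc n) + 2 * c - 2) + s) / lucasV p q r ^ Suc n"
    unfolding horadam_gchoose_sum_def sum.lessThan_Suc_shift by simp
  moreover have "r * (2 * (c - 1) + int (Suc n)) + s = r * (int (Suc n) + 2 * c - 2) + s"
    by (simp add: algebra_simps)
  ultimately show ?thesis
    unfolding horadam_lead_def by (simp add: power_int_diff field_simps)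
qed

theorem theorem4:
  fixes a b p q :: complex and r s c an :: int and n :: nat
  assumes "p \<noteq> 0" and "q \<noteq> 0" and "0 < n" and "lucasV p q r \<noteq> 0"
  shows "nested c n (\<lambda>a0. (-1) powi a0 * horadam a b p q (2 * r * a0 + s) / q powi (r * a0)) an
    = (-1) powi an * horadam a b p q (r * (2 * an + int n) + s) / (q powi (r * an) * lucasV p q r ^ n)
      + (-1) powi c / q powi (r * (c - 1)) *
        (\<Sum>j = 0..n - 1. horadam a b p q (r * (int n - int j + 2 * c - 2) + s) / lucasV p q r ^ (n - j)
           * ((of_int (an + int j - c) :: complex) gchoose j))"
proof -
  let ?g = "\<lambda>a0. (-1) powi a0 * horadam a b p q (2 * r * a0 + s) / q powi (r * a0)"
  let ?K = "(-1) powi c / q powi (r * (c - 1))"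
  let ?F = "\<lambda>n x. horadam_lead a b p q r s n x + ?K * horadam_gchoose_sum a b p q r s c n x"
  have "nested c n ?g = ?F n"
  proof (rule nested_eq_antidifference)
    show "?F 0 = ?g"
      by (rule ext) (simp add: horadam_lead_def horadam_gchoose_sum_def algebra_simps)
  next
    fix m k
    have "?F (Suc m) k - ?F (Suc m) (k - 1)
      = (horadam_lead a b p q r s (Suc m) k - horadam_lead a b p q r s (Suc m) (k - 1))
        + ?K * (horadam_gchoose_sum a b p q r s c (Suc m) k - horadam_gchoose_sum a b p q r s c (Suc m) (k - 1))"
      by (simp add: algebra_simps)
    then show "?F (Suc m) k - ?F (Suc m) (k - 1) = ?F m k"
      unfolding horadam_lead_diff[OF assms(2,4)] horadam_gchoose_sum_diff .
  next
    show "?F (Suc m) (c - 1) = 0" for m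
      by (rule horadam_closed_form_vanishes)
  qed
  moreover have "{0..n - 1} = {..<n}"
    using assms(3) by auto
  ultimately show ?thesis
    by (simp add: horadam_lead_def horadam_gchoose_sum_def)
qed

end
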